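(* Let $s\ge1$ be an integer and let $(G,Z)$ be a monic plantation. Then there exist $X\subseteq Z$ and $Y\subseteq V(G)\setminus Z$ with $|X|<s$ and $|Y|<2s\cdot s!$ such that exploding the vertices in $X$ and deleting the (remaining) vertices in $Y$ yields a selfless plantation.
   Context: Graphs are finite and simple. Two subsets of $V(G)$ are anticomplete if they are disjoint and no edge joins them; subgraphs are anticomplete if their vertex sets are. $G$ is $s\mathcal{O}$-free if no $s$ cycles of $G$ are pairwise vertex-disjoint and pairwise anticomplete. A set $Z\subseteq V(G)$ is cycle-hitting if every cycle of $G$ has a vertex in $Z$. A plantation is a pair $(G,Z)$ where $G$ is an $s\mathcal{O}$-free graph and $Z\subseteq V(G)$ is cycle-hitting. Let $F=G\setminus Z$ (a forest) and $N$ the set of vertices of $V(G)\setminus Z$ with a neighbour in $Z$. $(G,Z)$ is monic if $Z$ is stable and every vertex of $N$ has exactly one neighbour in $Z$. A transition of $(G,Z)$ is a path of $F$ of length at least one with both ends in $N$ and no internal vertex in $N$; a vertex $z\in Z$ adjacent to an end of a transition $P$ is a foot of $P$. A self-transition is a transition with only one foot; $(G,Z)$ is selfless if it has no self-transition. Deleting a vertex $v\in V(G)\setminus Z$ produces the plantation $(G\setminus\{v\},Z)$. Exploding a vertex $v\in Z$ produces the plantation $(G',Z\setminus\{v\})$, where $G'$ is obtained from $G$ by deleting $v$ and all its neighbours in $V(G)\setminus Z$. *)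

theory Defs
  imports Main
begin

definition graph :: "'a set \<Rightarrow> ('a \<Rightarrow> 'a \<Rightarrow> bool) \<Rightarrow> bool" where
  "graph V E \<longleftrightarrow> finite V \<and> (\<forall>u v. E u v \<longrightarrow> E v u) \<and> (\<forall>v. \<not> E v v)
     \<and> (\<forall>u v. E u v \<longrightarrow> u \<in> V \<and> v \<in> V)"

definition induced :: "('a \<Rightarrow> 'a \<Rightarrow> bool) \<Rightarrow> 'a set \<Rightarrow> 'a \<Rightarrow> 'a \<Rightarrow> bool" where
  "induced E W = (\<lambda>u v. E u v \<and> u \<in> W \<and> v \<in> W)"

definition is_cycle :: "'a set \<Rightarrow> ('a \<Rightarrow> 'a \<Rightarrow> bool) \<Rightarrow> 'a list \<Rightarrow> bool" where
  "is_cycle V E C \<longleftrightarrow> length C \<ge> 3 \<and> distinct C \<and> set C \<subseteq> V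
     \<and> (\<forall>i. Suc i < length C \<longrightarrow> E (C ! i) (C ! Suc i)) \<and> E (last C) (hd C)"

definition is_path :: "'a set \<Rightarrow> ('a \<Rightarrow> 'a \<Rightarrow> bool) \<Rightarrow> 'a list \<Rightarrow> bool" where
  "is_path V E P \<longleftrightarrow> P \<noteq> [] \<and> distinct P \<and> set P \<subseteq> V
     \<and> (\<forall>i. Suc i < length P \<longrightarrow> E (P ! i) (P ! Suc i))"

definition anticomplete :: "('a \<Rightarrow> 'a \<Rightarrow> bool) \<Rightarrow> 'a set \<Rightarrow> 'a set \<Rightarrow> bool" where
  "anticomplete E A B \<longleftrightarrow> A \<inter> B = {} \<and> (\<forall>a\<in>A. \<forall>b\<in>B. \<not> E a b)"

definition sO_free :: "nat \<Rightarrow> 'a set \<Rightarrow> ('a \<Rightarrow> 'a \<Rightarrow> bool) \<Rightarrow> bool" where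
  "sO_free s V E \<longleftrightarrow> \<not> (\<exists>Cs. length Cs = s \<and> (\<forall>C\<in>set Cs. is_cycle V E C)
     \<and> (\<forall>i j. i < s \<and> j < s \<and> i \<noteq> j \<longrightarrow> anticomplete E (set (Cs ! i)) (set (Cs ! j))))"

definition cycle_hitting :: "'a set \<Rightarrow> ('a \<Rightarrow> 'a \<Rightarrow> bool) \<Rightarrow> 'a set \<Rightarrow> bool" where
  "cycle_hitting V E Z \<longleftrightarrow> Z \<subseteq> V \<and> (\<forall>C. is_cycle V E C \<longrightarrow> set C \<inter> Z \<noteq> {})"

definition plantation :: "nat \<Rightarrow> 'a set \<Rightarrow> ('a \<Rightarrow> 'a \<Rightarrow> bool) \<Rightarrow> 'a set \<Rightarrow> bool" where
  "plantation s V E Z \<longleftrightarrow> graph V E \<and> sO_free s V E \<and> cycle_hitting V E Z"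

definition attach :: "'a set \<Rightarrow> ('a \<Rightarrow> 'a \<Rightarrow> bool) \<Rightarrow> 'a set \<Rightarrow> 'a set" where
  "attach V E Z = {v \<in> V - Z. \<exists>z\<in>Z. E v z}"

definition monic :: "'a set \<Rightarrow> ('a \<Rightarrow> 'a \<Rightarrow> bool) \<Rightarrow> 'a set \<Rightarrow> bool" where
  "monic V E Z \<longleftrightarrow> (\<forall>u\<in>Z. \<forall>v\<in>Z. \<not> E u v)
     \<and> (\<forall>v\<in>attach V E Z. \<exists>!z. z \<in> Z \<and> E v z)"

definition transition :: "'a set \<Rightarrow> ('a \<Rightarrow> 'a \<Rightarrow> bool) \<Rightarrow> 'a set \<Rightarrow> 'a list \<Rightarrow> bool" where
  "transition V E Z P \<longleftrightarrow> is_path (V - Z) (induced E (V - Z)) P \<and> length P \<ge> 2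
     \<and> hd P \<in> attach V E Z \<and> last P \<in> attach V E Z
     \<and> (\<forall>i. 0 < i \<and> Suc i < length P \<longrightarrow> P ! i \<notin> attach V E Z)"

definition feet :: "('a \<Rightarrow> 'a \<Rightarrow> bool) \<Rightarrow> 'a set \<Rightarrow> 'a list \<Rightarrow> 'a set" where
  "feet E Z P = {z \<in> Z. E z (hd P) \<or> E z (last P)}"

definition self_transition :: "'a set \<Rightarrow> ('a \<Rightarrow> 'a \<Rightarrow> bool) \<Rightarrow> 'a set \<Rightarrow> 'a list \<Rightarrow> bool" where
  "self_transition V E Z P \<longleftrightarrow> transition V E Z P \<and> card (feet E Z P) = 1"

definition selfless :: "'a set \<Rightarrow> ('a \<Rightarrow> 'a \<Rightarrow> bool) \<Rightarrow> 'a set \<Rightarrow> bool" where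
  "selfless V E Z \<longleftrightarrow> \<not> (\<exists>P. self_transition V E Z P)"

definition explode_delete :: "'a set \<Rightarrow> ('a \<Rightarrow> 'a \<Rightarrow> bool) \<Rightarrow> 'a set \<Rightarrow> 'a set \<Rightarrow> 'a set \<Rightarrow> 'a set" where
  "explode_delete V E Z X Y = V - X - {v \<in> V - Z. \<exists>x\<in>X. E x v} - Y"

end

theory Submission
  imports Defs
begin

text \<open>\<open>F = G - Z\<close> is a forest, and every self-transition \<open>P\<close> closes a cycle with its
  foot. In a forest, every nonempty family of paths contains a path \<open>P\<close> together with a set
  \<open>S\<close> of at most two vertices such that every path of the family disjoint from \<open>S\<close> is
  anticomplete to \<open>P\<close>. Apply this to the self-transitions, put the foot of \<open>P\<close> into \<open>X\<close>
  and \<open>S\<close> into \<open>Y\<close>; since \<open>Z\<close> is stable, every self-transition not hit by this has its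
  cycle anticomplete to the cycle of \<open>P\<close>. Repeating inside the part anticomplete to the
  chosen cycles produces pairwise anticomplete cycles, so \<open>s\<O>\<close>-freeness stops the process
  after \<open>s - 1\<close> rounds. Hence \<open>|X| < s\<close> and \<open>|Y| \<le> 2(s - 1)\<close>, and of monicity only the
  stability of \<open>Z\<close> is used.\<close>

lemma is_path_Cons:
  assumes "is_path W F Q" "x \<in> W" "x \<notin> set Q" "F x (hd Q)"
  shows "is_path W F (x # Q)"
  using assms unfolding is_path_def
  by (auto simp: nth_Cons hd_conv_nth split: nat.splits)

lemma is_path_tl:
  assumes "is_path W F (a # Q)" "Q \<noteq> []"
  shows "is_path W F Q"
  unfolding is_path_def
proof (intro conjI allI impI)
  fix i assume "Suc i < length Q"
  then have "Suc (Suc i) < length (a # Q)" by simp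
  then have "F ((a # Q) ! Suc i) ((a # Q) ! Suc (Suc i))"
    using assms(1) unfolding is_path_def by blast
  then show "F (Q ! i) (Q ! Suc i)" by simp
qed (use assms in \<open>auto simp: is_path_def\<close>)

lemma is_path_rev:
  assumes "is_path W F Q" "\<forall>u v. F u v \<longrightarrow> F v u"
  shows "is_path W F (rev Q)"
  unfolding is_path_def
proof (intro conjI allI impI)
  fix i assume "Suc i < length (rev Q)"
  then have i: "Suc (length Q - Suc (Suc i)) < length Q" "length Q - Suc i = Suc (length Q - Suc (Suc i))"
    by auto
  then have "F (Q ! (length Q - Suc (Suc i))) (Q ! (length Q - Suc i))"
    using assms(1) unfolding is_path_def by simp
  with i show "F (rev Q ! i) (rev Q ! Suc i)"
    using assms(2) by (simp add: rev_nth)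
qed (use assms in \<open>auto simp: is_path_def\<close>)

lemma is_path_mono:
  assumes "is_path V1 E1 P" "V1 \<subseteq> V2" "\<forall>u v. E1 u v \<longrightarrow> E2 u v"
  shows "is_path V2 E2 P"
  using assms unfolding is_path_def by blast

lemma is_cycle_mono:
  assumes "is_cycle V1 E1 C" "V1 \<subseteq> V2" "\<forall>u v. E1 u v \<longrightarrow> E2 u v"
  shows "is_cycle V2 E2 C"
  using assms unfolding is_cycle_def by blast

lemma is_path_induced:
  assumes "is_path W F P" "set P \<subseteq> U" "U \<subseteq> W"
  shows "is_path U (induced F U) P"
  using assms unfolding is_path_def induced_def by (auto dest: nth_mem)

lemma is_path_tl_avoiding_hd:
  assumes "is_path W F (l # R)" "R \<noteq> []"
  shows "is_path (W - {l}) (induced F (W - {l})) R" and "F l (hd R)"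
proof -
  have R: "is_path W F R" using is_path_tl[OF assms] .
  have "l \<notin> set R" using assms(1) unfolding is_path_def by simp
  moreover have "set R \<subseteq> W" using R unfolding is_path_def by blast
  ultimately show "is_path (W - {l}) (induced F (W - {l})) R"
    using is_path_induced[OF R, of "W - {l}"] by blast
  have "Suc 0 < length (l # R)" using assms(2) by simp
  then have "F ((l # R) ! 0) ((l # R) ! Suc 0)" using assms(1) unfolding is_path_def by blast
  then show "F l (hd R)" using assms(2) by (simp add: hd_conv_nth)
qed

lemma anticomplete_induced_iff:
  assumes "A \<subseteq> U" "B \<subseteq> U"
  shows "anticomplete (induced F U) A B \<longleftrightarrow> anticomplete F A B"
  using assms unfolding anticomplete_def induced_def by blast

lemma anticomplete_sym:
  assumes "anticomplete E A B" "\<forall>u v. E u v \<longrightarrow> E v u"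
  shows "anticomplete E B A"
  using assms unfolding anticomplete_def by blast

definition pairwise_anticomplete :: "('a \<Rightarrow> 'a \<Rightarrow> bool) \<Rightarrow> 'a list list \<Rightarrow> bool" where
  "pairwise_anticomplete E Cs \<longleftrightarrow> (\<forall>i j. i < length Cs \<and> j < length Cs \<and> i \<noteq> j \<longrightarrow>
     anticomplete E (set (Cs ! i)) (set (Cs ! j)))"

lemma pairwise_anticomplete_snoc:
  assumes Cs: "pairwise_anticomplete E Cs" and C: "\<forall>C'\<in>set Cs. anticomplete E (set C') (set C)"
    and sym: "\<forall>u v. E u v \<longrightarrow> E v u"
  shows "pairwise_anticomplete E (Cs @ [C])"
  unfolding pairwise_anticomplete_def
proof (intro allI impI)
  fix i j assume ij: "i < length (Cs @ [C]) \<and> j < length (Cs @ [C]) \<and> i \<noteq> j"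
  have last: "anticomplete E (set (Cs ! k)) (set C)" "anticomplete E (set C) (set (Cs ! k))"
    if "k < length Cs" for k
    using C that anticomplete_sym[OF _ sym] by (metis nth_mem)+
  show "anticomplete E (set ((Cs @ [C]) ! i)) (set ((Cs @ [C]) ! j))"
    using ij Cs last unfolding pairwise_anticomplete_def
    by (cases "i < length Cs"; cases "j < length Cs") (auto simp: nth_append)
qed

section \<open>Separating paths in a forest\<close>

definition forest :: "'a set \<Rightarrow> ('a \<Rightarrow> 'a \<Rightarrow> bool) \<Rightarrow> bool" where
  "forest W F \<longleftrightarrow> graph W F \<and> \<not> (\<exists>C. is_cycle W F C)"

text \<open>Isolated vertices count as leaves.\<close>
definition leaf :: "('a \<Rightarrow> 'a \<Rightarrow> bool) \<Rightarrow> 'a \<Rightarrow> bool" where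
  "leaf F l \<longleftrightarrow> (\<forall>a b. F l a \<and> F l b \<longrightarrow> a = b)"

lemma forest_remove_vertex:
  assumes "forest W F"
  shows "forest (W - {l}) (induced F (W - {l}))"
  using assms is_cycle_mono[of "W - {l}" "induced F (W - {l})" _ W F]
  unfolding forest_def graph_def induced_def by blast

lemma length_path_le_card:
  assumes "finite W" "is_path W F P"
  shows "length P \<le> card W"
  using assms unfolding is_path_def by (metis card_mono distinct_card)

text \<open>A neighbour of the first vertex of a longest path lies on the path, and if it were not
  the second vertex it would close a cycle.\<close>
lemma longest_path_hd_neighbour:
  assumes forest: "forest W F" and Q: "is_path W F Q"
    and longest: "\<And>P. is_path W F P \<Longrightarrow> length P \<le> length Q" and x: "F (hd Q) x"
  shows "x = Q ! 1"
proof -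
  have sym: "\<forall>u v. F u v \<longrightarrow> F v u" and irr: "\<forall>v. \<not> F v v"
    and inW: "\<forall>u v. F u v \<longrightarrow> u \<in> W \<and> v \<in> W" and acyc: "\<not> (\<exists>C. is_cycle W F C)"
    using forest unfolding forest_def graph_def by auto
  have Qne: "Q \<noteq> []" and Qd: "distinct Q" and QW: "set Q \<subseteq> W"
    and Qe: "\<And>i. Suc i < length Q \<Longrightarrow> F (Q ! i) (Q ! Suc i)"
    using Q unfolding is_path_def by auto
  have "x \<in> set Q"
  proof (rule ccontr)
    assume "x \<notin> set Q"
    then have "is_path W F (x # Q)" using is_path_Cons[OF Q] inW sym x by blast
    with longest show False by fastforce
  qed
  then obtain j where j: "j < length Q" "Q ! j = x" by (metis in_set_conv_nth)
  have "j \<noteq> 0" using j irr x Qne by (metis hd_conv_nth)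
  moreover have "\<not> 2 \<le> j"
  proof
    assume "2 \<le> j"
    have "is_cycle W F (take (Suc j) Q)"
      unfolding is_cycle_def
    proof (intro conjI allI impI)
      have "last (take (Suc j) Q) = x" using j Qne
        by (auto simp: last_conv_nth min_def intro: arg_cong[where f="(!) Q"])
      then show "F (last (take (Suc j) Q)) (hd (take (Suc j) Q))" using sym x Qne by simp
    qed (use \<open>2 \<le> j\<close> j Qd QW Qe in \<open>auto dest: in_set_takeD\<close>)
    with acyc show False by blast
  qed
  ultimately show ?thesis using j by (simp add: numeral_2_eq_2 le_Suc_eq not_le less_Suc_eq)
qed

lemma forest_has_leaf:
  assumes forest: "forest W F" and "W \<noteq> {}"
  shows "\<exists>l\<in>W. leaf F l"
proof -
  have fin: "finite W" using forest unfolding forest_def graph_def by blast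
  obtain w where "w \<in> W" using \<open>W \<noteq> {}\<close> by auto
  then have "is_path W F [w]" unfolding is_path_def by auto
  then obtain Q where Q: "is_path W F Q"
    and longest: "\<And>P. is_path W F P \<Longrightarrow> length P \<le> length Q"
    using ex_has_greatest_nat[of "is_path W F" "[w]" length "Suc (card W)"]
      length_path_le_card[OF fin] by (metis le_imp_less_Suc)
  have "leaf F (hd Q)"
    using longest_path_hd_neighbour[OF forest Q longest] unfolding leaf_def by metis
  moreover have "hd Q \<in> W" using Q unfolding is_path_def by auto
  ultimately show ?thesis by blast
qed

lemma leaf_on_path_is_end:
  assumes "is_path W F P" "l \<in> set P" "leaf F l" "\<forall>u v. F u v \<longrightarrow> F v u"
  shows "hd P = l \<or> last P = l"
proof (rule ccontr)
  assume ends: "\<not> (hd P = l \<or> last P = l)"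
  obtain i where i: "i < length P" "P ! i = l" using assms(2) by (metis in_set_conv_nth)
  have "P \<noteq> []" using assms(2) by auto
  then have "i \<noteq> 0" "Suc i \<noteq> length P"
    using ends i by (metis hd_conv_nth, metis diff_Suc_1 last_conv_nth)
  then obtain k where k: "i = Suc k" "Suc i < length P" using i by (cases i) auto
  have "F (P ! k) (P ! i)" "F (P ! i) (P ! Suc i)" using assms(1) k unfolding is_path_def by auto
  then have "P ! k = P ! Suc i" using assms(3,4) i unfolding leaf_def by metis
  moreover have "distinct P" using assms(1) unfolding is_path_def by auto
  ultimately show False using k by (simp add: nth_eq_iff_index_eq)
qed

lemma path_remove_leaf:
  assumes P: "is_path W F P" and l: "leaf F l" and sym: "\<forall>u v. F u v \<longrightarrow> F v u"
    and "P \<noteq> [l]"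
  shows "is_path (W - {l}) (induced F (W - {l})) (filter (\<lambda>x. x \<noteq> l) P)"
    and "l \<in> set P \<Longrightarrow> \<exists>u\<in>set P - {l}. F l u"
proof -
  have sym': "\<forall>u v. induced F (W - {l}) u v \<longrightarrow> induced F (W - {l}) v u"
    using sym unfolding induced_def by blast
  have dP: "distinct P" and PW: "set P \<subseteq> W" using P unfolding is_path_def by auto
  consider "l \<notin> set P" | "hd P = l" | "last P = l"
    using leaf_on_path_is_end[OF P _ l sym] by blast
  then have "is_path (W - {l}) (induced F (W - {l})) (filter (\<lambda>x. x \<noteq> l) P)
      \<and> (l \<in> set P \<longrightarrow> (\<exists>u\<in>set P - {l}. F l u))"
  proof cases
    case 1
    then have "filter (\<lambda>x. x \<noteq> l) P = P" by (auto simp: filter_id_conv)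
    moreover have "is_path (W - {l}) (induced F (W - {l})) P"
      using is_path_induced[OF P, of "W - {l}"] PW 1 by blast
    ultimately show ?thesis using 1 by simp
  next
    case 2
    then obtain R where R: "P = l # R" "R \<noteq> []"
      using P \<open>P \<noteq> [l]\<close> unfolding is_path_def by (cases P) auto
    have "l \<notin> set R" using dP R(1) by simp
    then have "filter (\<lambda>x. x \<noteq> l) P = R" using R(1) by (auto simp: filter_id_conv)
    moreover have "hd R \<in> set P - {l}" using R hd_in_set \<open>l \<notin> set R\<close> by auto
    ultimately show ?thesis using is_path_tl_avoiding_hd[OF P[unfolded R(1)] R(2)] by auto
  next
    case 3
    have "P \<noteq> []" using P unfolding is_path_def by blast
    then have "hd (rev P) = l" "rev P \<noteq> [l]" using 3 \<open>P \<noteq> [l]\<close> by (auto simp: hd_rev)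
    moreover have "rev P \<noteq> []" using \<open>P \<noteq> []\<close> by simp
    ultimately obtain R where R: "rev P = l # R" "R \<noteq> []" by (cases "rev P") auto
    have "l \<notin> set R" using dP R(1) by (metis distinct.simps(2) distinct_rev)
    then have "filter (\<lambda>x. x \<noteq> l) (rev P) = R" using R(1) by (auto simp: filter_id_conv)
    then have filt: "filter (\<lambda>x. x \<noteq> l) P = rev R" by (metis rev_filter rev_rev_ident)
    have path_rev: "is_path W F (l # R)" using is_path_rev[OF P sym] R(1) by simp
    have "set R \<subseteq> set P" using R(1) by (metis set_rev set_subset_Cons)
    then have "hd R \<in> set P - {l}" using hd_in_set[OF R(2)] \<open>l \<notin> set R\<close> by blast
    moreover have "is_path (W - {l}) (induced F (W - {l})) (rev R)"
      using is_path_rev[OF is_path_tl_avoiding_hd(1)[OF path_rev R(2)] sym'] .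
    ultimately show ?thesis using filt is_path_tl_avoiding_hd(2)[OF path_rev R(2)] by auto
  qed
  then show "is_path (W - {l}) (induced F (W - {l})) (filter (\<lambda>x. x \<noteq> l) P)"
    and "l \<in> set P \<Longrightarrow> \<exists>u\<in>set P - {l}. F l u" by blast+
qed

lemma anticomplete_add_leaf:
  assumes "anticomplete F (A - {l}) (B - {l})" "leaf F l"
    "l \<in> A \<Longrightarrow> \<exists>u\<in>A - {l}. F l u" "l \<in> B \<Longrightarrow> \<exists>u\<in>B - {l}. F l u"
    "\<forall>u v. F u v \<longrightarrow> F v u" "\<forall>v. \<not> F v v"
  shows "anticomplete F A B"
  using assms unfolding anticomplete_def leaf_def by (smt (verit) DiffI disjoint_iff singletonD)

lemma anticomplete_restore_leaf:
  assumes forest: "forest W F" and l: "leaf F l" and P: "is_path W F P" "P \<noteq> [l]"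
    and Q: "is_path W F Q" "Q \<noteq> [l]"
    and PQ: "anticomplete (induced F (W - {l})) (set P - {l}) (set Q - {l})"
  shows "anticomplete F (set P) (set Q)"
proof -
  have sym: "\<forall>u v. F u v \<longrightarrow> F v u" and irr: "\<forall>v. \<not> F v v"
    using forest unfolding forest_def graph_def by auto
  have "set P - {l} \<subseteq> W - {l}" "set Q - {l} \<subseteq> W - {l}"
    using P(1) Q(1) unfolding is_path_def by auto
  then have "anticomplete F (set P - {l}) (set Q - {l})"
    using PQ anticomplete_induced_iff by blast
  then show ?thesis
    using anticomplete_add_leaf[OF _ l _ _ sym irr] path_remove_leaf(2)[OF P(1) l sym P(2)]
      path_remove_leaf(2)[OF Q(1) l sym Q(2)] by blast
qed

lemma leaf_closed_neighbourhood:
  assumes "forest W F" "l \<in> W" "leaf F l"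
  shows "insert l {u. F l u} \<subseteq> W" and "card (insert l {u. F l u}) \<le> 2"
proof -
  have "{u. F l u} \<subseteq> W" "finite W" using assms(1) unfolding forest_def graph_def by blast+
  then show "insert l {u. F l u} \<subseteq> W" using assms(2) by blast
  have "finite {u. F l u}" using finite_subset[OF \<open>{u. F l u} \<subseteq> W\<close> \<open>finite W\<close>] .
  moreover have "card {u. F l u} \<le> Suc 0"
    using calculation assms(3) unfolding leaf_def by (simp add: card_le_Suc0_iff_eq)
  ultimately show "card (insert l {u. F l u}) \<le> 2" by (simp add: card_insert_if)
qed

text \<open>Induction on the number of vertices, removing a leaf \<open>l\<close>: if the one-vertex path
  \<open>[l]\<close> belongs to the family it is separated by \<open>l\<close> and its neighbour; otherwise \<open>l\<close> can
  be deleted from every path of the family without changing which pairs are anticomplete.\<close>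
lemma forest_paths_separation:
  assumes "forest W F" "\<P> \<noteq> {}" "\<forall>P\<in>\<P>. is_path W F P"
  shows "\<exists>P\<in>\<P>. \<exists>S\<subseteq>W. card S \<le> 2 \<and>
           (\<forall>Q\<in>\<P>. set Q \<inter> S = {} \<longrightarrow> anticomplete F (set P) (set Q))"
  using assms
proof (induction "card W" arbitrary: W F \<P> rule: less_induct)
  case less
  have fin: "finite W" and sym: "\<forall>u v. F u v \<longrightarrow> F v u"
    using less.prems(1) unfolding forest_def graph_def by auto
  have paths: "\<And>P. P \<in> \<P> \<Longrightarrow> is_path W F P" using less.prems(3) by blast
  obtain P0 where "P0 \<in> \<P>" using less.prems(2) by blast
  then have "W \<noteq> {}" using paths[of P0] unfolding is_path_def by (cases P0) auto
  then obtain l where "l \<in> W" and l: "leaf F l"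
    using forest_has_leaf[OF less.prems(1)] by blast
  show ?case
  proof (cases "[l] \<in> \<P>")
    case True
    have "anticomplete F (set [l]) (set Q)" if "set Q \<inter> insert l {u. F l u} = {}" for Q
      using that unfolding anticomplete_def by auto
    then show ?thesis using True leaf_closed_neighbourhood[OF less.prems(1) \<open>l \<in> W\<close> l] by blast
  next
    case False
    define W' where "W' = W - {l}"
    define strip where "strip = filter (\<lambda>x. x \<noteq> l)"
    have not_l: "Q \<noteq> [l]" if "Q \<in> \<P>" for Q using False that by blast
    have "card W' < card W" unfolding W'_def using fin \<open>l \<in> W\<close> by (rule card_Diff1_less)
    moreover have "forest W' (induced F W')"
      unfolding W'_def by (rule forest_remove_vertex[OF less.prems(1)])
    moreover have "strip ` \<P> \<noteq> {}" using less.prems(2) by blast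
    moreover have "\<forall>P'\<in>strip ` \<P>. is_path W' (induced F W') P'"
      using path_remove_leaf(1)[OF paths l sym not_l] unfolding strip_def W'_def by blast
    ultimately have "\<exists>P'\<in>strip ` \<P>. \<exists>S\<subseteq>W'. card S \<le> 2 \<and>
        (\<forall>Q'\<in>strip ` \<P>. set Q' \<inter> S = {} \<longrightarrow> anticomplete (induced F W') (set P') (set Q'))"
      by (rule less.hyps)
    then obtain P S where P: "P \<in> \<P>" and S: "S \<subseteq> W'" "card S \<le> 2"
      and sep: "\<forall>Q\<in>\<P>. set (strip Q) \<inter> S = {} \<longrightarrow>
                  anticomplete (induced F W') (set (strip P)) (set (strip Q))"
      by blast
    have set_strip: "set (strip Q) = set Q - {l}" for Q unfolding strip_def by auto
    have "anticomplete F (set P) (set Q)" if "Q \<in> \<P>" "set Q \<inter> S = {}" for Q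
      using anticomplete_restore_leaf[OF less.prems(1) l paths[OF P] not_l[OF P]
          paths[OF that(1)] not_l[OF that(1)]] sep that set_strip unfolding W'_def by auto
    then show ?thesis using P S unfolding W'_def by blast
  qed
qed

definition foot :: "('a \<Rightarrow> 'a \<Rightarrow> bool) \<Rightarrow> 'a set \<Rightarrow> 'a list \<Rightarrow> 'a" where
  "foot E Z Q = the_elem (feet E Z Q)"

definition foot_cycle :: "('a \<Rightarrow> 'a \<Rightarrow> bool) \<Rightarrow> 'a set \<Rightarrow> 'a list \<Rightarrow> 'a list" where
  "foot_cycle E Z Q = foot E Z Q # Q"

lemma feet_self_transition:
  assumes "self_transition V E Z Q"
  shows "feet E Z Q = {foot E Z Q}"
  using assms unfolding self_transition_def foot_def by (metis card_1_singletonE the_elem_eq)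

lemma self_transition_path:
  assumes "self_transition V E Z Q"
  shows "is_path (V - Z) (induced E (V - Z)) Q" "2 \<le> length Q" "set Q \<subseteq> V - Z"
  using assms unfolding self_transition_def transition_def is_path_def by auto

lemma plantation_induced:
  assumes "plantation s V E Z" "V' \<subseteq> V"
  shows "plantation s V' (induced E V') (Z \<inter> V')"
proof -
  have G: "graph V E" and free: "sO_free s V E" and hit: "cycle_hitting V E Z"
    using assms(1) unfolding plantation_def by blast+
  have "finite V'" using G finite_subset[OF assms(2)] unfolding graph_def by blast
  then have "graph V' (induced E V')" using G unfolding graph_def induced_def by blast
  moreover have cycle: "is_cycle V E C" "set C \<subseteq> V'" if "is_cycle V' (induced E V') C" for C
    using that is_cycle_mono[OF that assms(2)] unfolding is_cycle_def induced_def by blast+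
  moreover have "sO_free s V' (induced E V')"
    using free cycle anticomplete_induced_iff unfolding sO_free_def by (metis nth_mem)
  moreover have "cycle_hitting V' (induced E V') (Z \<inter> V')"
    using hit cycle unfolding cycle_hitting_def by blast
  ultimately show ?thesis unfolding plantation_def by blast
qed

lemma attach_induced:
  assumes "graph V E" "V' \<subseteq> V" "\<forall>z\<in>Z - V'. \<forall>v\<in>V' - Z. \<not> E z v"
  shows "attach V' (induced E V') (Z \<inter> V') = attach V E Z \<inter> V'"
  using assms unfolding attach_def induced_def graph_def by blast

lemma feet_induced:
  assumes "graph V E" "\<forall>z\<in>Z - V'. \<forall>v\<in>V' - Z. \<not> E z v" "Q \<noteq> []" "set Q \<subseteq> V' - Z"
  shows "feet (induced E V') (Z \<inter> V') Q = feet E Z Q"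
  using assms hd_in_set[OF assms(3)] last_in_set[OF assms(3)]
  unfolding feet_def induced_def by blast

lemma self_transition_induced:
  assumes G: "graph V E" and "V' \<subseteq> V" and expl: "\<forall>z\<in>Z - V'. \<forall>v\<in>V' - Z. \<not> E z v"
    and Q: "self_transition V' (induced E V') (Z \<inter> V') Q"
  shows "self_transition V E Z Q" and "set Q \<subseteq> V' - Z"
    and "feet (induced E V') (Z \<inter> V') Q = feet E Z Q"
proof -
  have "V' - Z \<inter> V' = V' - Z" by blast
  then have path: "is_path (V' - Z) (induced (induced E V') (V' - Z)) Q" and long: "2 \<le> length Q"
    using self_transition_path[OF Q] by simp_all
  then show QV': "set Q \<subseteq> V' - Z" unfolding is_path_def by blast
  have path': "is_path (V - Z) (induced E (V - Z)) Q"
  proof (rule is_path_mono[OF path])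
    show "V' - Z \<subseteq> V - Z" using \<open>V' \<subseteq> V\<close> by blast
    then show "\<forall>u v. induced (induced E V') (V' - Z) u v \<longrightarrow> induced E (V - Z) u v"
      unfolding induced_def by blast
  qed
  have att: "attach V' (induced E V') (Z \<inter> V') = attach V E Z \<inter> V'"
    by (rule attach_induced[OF G \<open>V' \<subseteq> V\<close> expl])
  have T': "transition V' (induced E V') (Z \<inter> V') Q"
    using Q unfolding self_transition_def by blast
  have T: "transition V E Z Q"
    unfolding transition_def
  proof (intro conjI allI impI path' long)
    show "hd Q \<in> attach V E Z" "last Q \<in> attach V E Z" using T' att unfolding transition_def by blast+
    fix i assume i: "0 < i \<and> Suc i < length Q"
    then have "Q ! i \<in> V'" using QV' by (meson DiffD1 Suc_lessD nth_mem subsetD)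
    then show "Q ! i \<notin> attach V E Z" using i T' att unfolding transition_def by blast
  qed
  have "Q \<noteq> []" using long by auto
  then show feet: "feet (induced E V') (Z \<inter> V') Q = feet E Z Q"
    using feet_induced[OF G expl _ QV'] by blast
  show "self_transition V E Z Q"
    using T Q feet unfolding self_transition_def by simp
qed

lemma explode_delete_subset: "explode_delete V E Z X Y \<subseteq> V"
  unfolding explode_delete_def by blast

lemma Z_Int_explode_delete:
  assumes "Z \<subseteq> V" "X \<subseteq> Z" "Y \<subseteq> V - Z"
  shows "Z \<inter> explode_delete V E Z X Y = Z - X"
  using assms unfolding explode_delete_def by blast

lemma explode_delete_no_edge:
  assumes "X \<subseteq> Z" "Y \<subseteq> V - Z" "Z \<subseteq> V"
  shows "\<forall>z\<in>Z - explode_delete V E Z X Y. \<forall>v\<in>explode_delete V E Z X Y - Z. \<not> E z v"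
  using assms unfolding explode_delete_def by blast

section \<open>Hitting all self-transitions\<close>

locale stable_plantation =
  fixes s :: nat and V Z :: "'a set" and E :: "'a \<Rightarrow> 'a \<Rightarrow> bool"
  assumes plantation: "plantation s V E Z"
    and Z_stable: "\<forall>u\<in>Z. \<forall>v\<in>Z. \<not> E u v"
begin

lemma E_sym: "E u v \<Longrightarrow> E v u"
  and E_irrefl: "\<not> E v v"
  and finite_V: "finite V"
  and Z_subset: "Z \<subseteq> V"
  and cycle_meets_Z: "is_cycle V E C \<Longrightarrow> set C \<inter> Z \<noteq> {}"
  using plantation unfolding plantation_def graph_def cycle_hitting_def by blast+

lemma self_transition_Z_neighbour:
  assumes Q: "self_transition V E Z Q" and "v \<in> set Q" "z \<in> Z" "E v z"
  shows "z = foot E Z Q"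
proof -
  have T: "transition V E Z Q" and long: "2 \<le> length Q" and QVZ: "set Q \<subseteq> V - Z"
    using Q self_transition_path unfolding self_transition_def by blast+
  have "v \<in> attach V E Z" using assms(2-4) QVZ unfolding attach_def by blast
  obtain i where i: "i < length Q" "Q ! i = v" using assms(2) by (metis in_set_conv_nth)
  have "Q \<noteq> []" using long by auto
  have "v = hd Q \<or> v = last Q"
  proof (rule ccontr)
    assume "\<not> (v = hd Q \<or> v = last Q)"
    then have "i \<noteq> 0" "Suc i \<noteq> length Q"
      using i \<open>Q \<noteq> []\<close> by (metis hd_conv_nth, metis diff_Suc_1 last_conv_nth)
    then have "0 < i" "Suc i < length Q" using i(1) by auto
    with T i \<open>v \<in> attach V E Z\<close> show False unfolding transition_def by blast
  qed
  then have "z \<in> feet E Z Q" using assms(3,4) E_sym unfolding feet_def by blast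
  then show ?thesis using feet_self_transition[OF Q] by blast
qed

lemma foot_in_Z: "self_transition V E Z Q \<Longrightarrow> foot E Z Q \<in> Z"
  using feet_self_transition unfolding feet_def by blast

lemma foot_adjacent_ends:
  assumes Q: "self_transition V E Z Q"
  shows "E (foot E Z Q) (hd Q)" "E (foot E Z Q) (last Q)"
proof -
  have "Q \<noteq> []" using self_transition_path(2)[OF Q] by auto
  have "E (foot E Z Q) v" if v: "v \<in> set Q" "v \<in> attach V E Z" for v
  proof -
    obtain z where "z \<in> Z" "E v z" using v(2) unfolding attach_def by blast
    then show ?thesis using self_transition_Z_neighbour[OF Q v(1)] E_sym by blast
  qed
  then show "E (foot E Z Q) (hd Q)" "E (foot E Z Q) (last Q)"
    using Q \<open>Q \<noteq> []\<close> unfolding self_transition_def transition_def by simp_all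
qed

lemma foot_cycle_is_cycle:
  assumes Q: "self_transition V E Z Q"
  shows "is_cycle V E (foot_cycle E Z Q)"
proof -
  have P: "is_path (V - Z) (induced E (V - Z)) Q" and long: "2 \<le> length Q"
    using self_transition_path[OF Q] by blast+
  then have "Q \<noteq> []" by auto
  show ?thesis unfolding is_cycle_def foot_cycle_def
  proof (intro conjI allI impI)
    fix i assume i: "Suc i < length (foot E Z Q # Q)"
    show "E ((foot E Z Q # Q) ! i) ((foot E Z Q # Q) ! Suc i)"
    proof (cases i)
      case 0 then show ?thesis using foot_adjacent_ends(1)[OF Q] \<open>Q \<noteq> []\<close> by (simp add: hd_conv_nth)
    next
      case (Suc j) then show ?thesis using P i unfolding is_path_def induced_def by simp
    qed
  next
    show "3 \<le> length (foot E Z Q # Q)" using long by simp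
    show "distinct (foot E Z Q # Q)" "set (foot E Z Q # Q) \<subseteq> V"
      using P foot_in_Z[OF Q] Z_subset unfolding is_path_def by auto
    show "E (last (foot E Z Q # Q)) (hd (foot E Z Q # Q))"
      using E_sym[OF foot_adjacent_ends(2)[OF Q]] \<open>Q \<noteq> []\<close> by simp
  qed
qed

lemma forest_outside_Z: "forest (V - Z) (induced E (V - Z))"
proof -
  have "finite (V - Z)" using finite_V by simp
  then have "graph (V - Z) (induced E (V - Z))"
    unfolding graph_def induced_def using E_sym E_irrefl by blast
  moreover have "\<not> is_cycle (V - Z) (induced E (V - Z)) C" for C
  proof
    assume C: "is_cycle (V - Z) (induced E (V - Z)) C"
    then have "is_cycle V E C" using is_cycle_mono[OF C] unfolding induced_def by blast
    moreover have "set C \<subseteq> V - Z" using C unfolding is_cycle_def by blast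
    ultimately show False using cycle_meets_Z by blast
  qed
  ultimately show ?thesis unfolding forest_def by blast
qed

lemma self_transitions_separation:
  assumes "\<Q> \<noteq> {}" "\<forall>Q\<in>\<Q>. self_transition V E Z Q"
  shows "\<exists>P\<in>\<Q>. \<exists>S\<subseteq>V - Z. card S \<le> 2 \<and>
           (\<forall>Q\<in>\<Q>. set Q \<inter> S = {} \<longrightarrow> anticomplete E (set P) (set Q))"
proof -
  have "\<forall>Q\<in>\<Q>. is_path (V - Z) (induced E (V - Z)) Q"
    using assms(2) self_transition_path(1) by blast
  then obtain P S where "P \<in> \<Q>" "S \<subseteq> V - Z" "card S \<le> 2"
    and sep: "\<forall>Q\<in>\<Q>. set Q \<inter> S = {} \<longrightarrow> anticomplete (induced E (V - Z)) (set P) (set Q)"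
    using forest_paths_separation[OF forest_outside_Z assms(1)] by blast
  have "anticomplete E (set P) (set Q)" if "Q \<in> \<Q>" "set Q \<inter> S = {}" for Q
  proof -
    have "set P \<subseteq> V - Z" "set Q \<subseteq> V - Z"
      using assms(2) \<open>P \<in> \<Q>\<close> that(1) self_transition_path(3) by blast+
    then show ?thesis using sep that anticomplete_induced_iff by metis
  qed
  then show ?thesis using \<open>P \<in> \<Q>\<close> \<open>S \<subseteq> V - Z\<close> \<open>card S \<le> 2\<close> by blast
qed

text \<open>Here stability of \<open>Z\<close> is used: distinct feet are non-adjacent.\<close>
lemma foot_cycles_anticomplete:
  assumes P: "self_transition V E Z P" and Q: "self_transition V E Z Q"
    and PQ: "anticomplete E (set P) (set Q)" and feet: "foot E Z P \<noteq> foot E Z Q"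
  shows "anticomplete E (set (foot_cycle E Z P)) (set (foot_cycle E Z Q))"
proof -
  have "\<not> E (foot E Z P) (foot E Z Q)"
    using Z_stable foot_in_Z[OF P] foot_in_Z[OF Q] by blast
  moreover have "\<not> E (foot E Z P) v" if "v \<in> set Q" for v
    using self_transition_Z_neighbour[OF Q that foot_in_Z[OF P]] E_sym[of "foot E Z P" v] feet
    by blast
  moreover have "\<not> E u (foot E Z Q)" if "u \<in> set P" for u
    using self_transition_Z_neighbour[OF P that foot_in_Z[OF Q]] feet by auto
  moreover have "foot E Z P \<notin> set Q" "foot E Z Q \<notin> set P"
    using foot_in_Z[OF P] foot_in_Z[OF Q] self_transition_path(3)[OF P]
      self_transition_path(3)[OF Q] by blast+
  ultimately show ?thesis
    using PQ feet unfolding anticomplete_def foot_cycle_def by (simp add: disjoint_iff)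
qed

definition self_transitions_within :: "'a set \<Rightarrow> 'a list set" where
  "self_transitions_within H = {Q. self_transition V E Z Q \<and> set (foot_cycle E Z Q) \<subseteq> H}"

definition anticomplete_packing :: "'a list list \<Rightarrow> 'a set \<Rightarrow> bool" where
  "anticomplete_packing Cs H \<longleftrightarrow> (\<forall>C\<in>set Cs. is_cycle V E C) \<and> pairwise_anticomplete E Cs
     \<and> (\<forall>C\<in>set Cs. anticomplete E (set C) H)"

lemma anticomplete_packing_length: "anticomplete_packing Cs H \<Longrightarrow> length Cs \<noteq> s"
  using plantation unfolding plantation_def sO_free_def anticomplete_packing_def
    pairwise_anticomplete_def by metis

lemma anticomplete_packing_snoc:
  assumes "anticomplete_packing Cs H" and P: "P \<in> self_transitions_within H"
  shows "anticomplete_packing (Cs @ [foot_cycle E Z P])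
           {v \<in> H. anticomplete E (set (foot_cycle E Z P)) {v}}"
proof -
  have "\<forall>C'\<in>set Cs. anticomplete E (set C') (set (foot_cycle E Z P))"
    using assms unfolding anticomplete_packing_def self_transitions_within_def anticomplete_def
    by blast
  then have "pairwise_anticomplete E (Cs @ [foot_cycle E Z P])"
    using pairwise_anticomplete_snoc assms(1) E_sym unfolding anticomplete_packing_def by blast
  moreover have "is_cycle V E (foot_cycle E Z P)"
    using P foot_cycle_is_cycle unfolding self_transitions_within_def by blast
  ultimately show ?thesis
    using assms(1) unfolding anticomplete_packing_def anticomplete_def by auto
qed

lemma self_transitions_hit_after_round:
  assumes P: "P \<in> self_transitions_within H"
    and sep: "\<forall>Q\<in>self_transitions_within H. set Q \<inter> S = {} \<longrightarrow> anticomplete E (set P) (set Q)"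
    and hit: "\<forall>Q\<in>self_transitions_within {v \<in> H. anticomplete E (set (foot_cycle E Z P)) {v}}.
                set Q \<inter> Y \<noteq> {} \<or> foot E Z Q \<in> X"
    and Q: "Q \<in> self_transitions_within H"
  shows "set Q \<inter> (S \<union> Y) \<noteq> {} \<or> foot E Z Q \<in> insert (foot E Z P) X"
proof (cases "set Q \<inter> S = {} \<and> foot E Z P \<noteq> foot E Z Q")
  case True
  then have "anticomplete E (set (foot_cycle E Z P)) (set (foot_cycle E Z Q))"
    using foot_cycles_anticomplete sep P Q unfolding self_transitions_within_def by blast
  then have "Q \<in> self_transitions_within {v \<in> H. anticomplete E (set (foot_cycle E Z P)) {v}}"
    using Q unfolding self_transitions_within_def anticomplete_def by blast
  then show ?thesis using hit by blast
qed auto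

text \<open>\<open>Cs\<close> are the cycles chosen in earlier rounds, \<open>H\<close> the vertices anticomplete to all of
  them, and \<open>n\<close> the number of rounds left; \<open>anticomplete_packing_length\<close> rules out an
  \<open>s\<close>-th cycle.\<close>
lemma self_transitions_hitting_set:
  assumes "Suc (length Cs + n) = s" "anticomplete_packing Cs H"
  shows "\<exists>X\<subseteq>Z. \<exists>Y\<subseteq>V - Z. card X \<le> n \<and> card Y \<le> 2 * n \<and>
           (\<forall>Q\<in>self_transitions_within H. set Q \<inter> Y \<noteq> {} \<or> foot E Z Q \<in> X)"
  using assms
proof (induction n arbitrary: Cs H)
  case 0
  have "self_transitions_within H = {}"
  proof (rule ccontr)
    assume "self_transitions_within H \<noteq> {}"
    then obtain P where "P \<in> self_transitions_within H" by blast
    from anticomplete_packing_snoc[OF 0(2) this] anticomplete_packing_length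
    have "length (Cs @ [foot_cycle E Z P]) \<noteq> s" by blast
    with 0(1) show False by simp
  qed
  then show ?case by (intro exI[of _ "{}"] conjI) simp_all
next
  case (Suc n)
  show ?case
  proof (cases "self_transitions_within H = {}")
    case True
    then show ?thesis by (intro exI[of _ "{}"] conjI) simp_all
  next
    case False
    then obtain P S where P: "P \<in> self_transitions_within H" and S: "S \<subseteq> V - Z" "card S \<le> 2"
      and sep: "\<forall>Q\<in>self_transitions_within H. set Q \<inter> S = {} \<longrightarrow> anticomplete E (set P) (set Q)"
      using self_transitions_separation[OF False] unfolding self_transitions_within_def by blast
    define H' where "H' = {v \<in> H. anticomplete E (set (foot_cycle E Z P)) {v}}"
    have "anticomplete_packing (Cs @ [foot_cycle E Z P]) H'"
      unfolding H'_def by (rule anticomplete_packing_snoc[OF Suc.prems(2) P])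
    moreover have "Suc (length (Cs @ [foot_cycle E Z P]) + n) = s" using Suc.prems(1) by simp
    ultimately obtain X Y where X: "X \<subseteq> Z" "card X \<le> n" and Y: "Y \<subseteq> V - Z" "card Y \<le> 2 * n"
      and hit: "\<forall>Q\<in>self_transitions_within H'. set Q \<inter> Y \<noteq> {} \<or> foot E Z Q \<in> X"
      using Suc.IH by blast
    have "finite X" using finite_subset[OF order_trans[OF X(1) Z_subset] finite_V] .
    then have "card (insert (foot E Z P) X) \<le> Suc n" using X(2) by (simp add: card_insert_if)
    moreover have "card (S \<union> Y) \<le> 2 * Suc n" using S(2) Y(2) card_Un_le[of S Y] by simp
    moreover have "insert (foot E Z P) X \<subseteq> Z" "S \<union> Y \<subseteq> V - Z"
      using P foot_in_Z X(1) S(1) Y(1) unfolding self_transitions_within_def by blast+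
    moreover have "\<forall>Q\<in>self_transitions_within H.
        set Q \<inter> (S \<union> Y) \<noteq> {} \<or> foot E Z Q \<in> insert (foot E Z P) X"
      using self_transitions_hit_after_round[OF P sep hit[unfolded H'_def]] by blast
    ultimately show ?thesis
      by (intro exI[of _ "insert (foot E Z P) X"] exI[of _ "S \<union> Y"] conjI) auto
  qed
qed

lemma selfless_explode_delete:
  assumes X: "X \<subseteq> Z" and Y: "Y \<subseteq> V - Z"
    and hit: "\<forall>Q\<in>self_transitions_within V. set Q \<inter> Y \<noteq> {} \<or> foot E Z Q \<in> X"
  shows "selfless (explode_delete V E Z X Y) (induced E (explode_delete V E Z X Y)) (Z - X)"
  unfolding selfless_def
proof
  let ?V' = "explode_delete V E Z X Y"
  assume "\<exists>Q. self_transition ?V' (induced E ?V') (Z - X) Q"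
  then obtain Q where Q: "self_transition ?V' (induced E ?V') (Z \<inter> ?V') Q"
    using Z_Int_explode_delete[OF Z_subset X Y] by auto
  have G: "graph V E" using plantation unfolding plantation_def by blast
  note transfer = self_transition_induced[OF G explode_delete_subset
      explode_delete_no_edge[OF X Y Z_subset] Q]
  have old: "self_transition V E Z Q" and QV': "set Q \<subseteq> ?V' - Z"
    using transfer(1,2) .
  have "foot E Z Q \<in> feet (induced E ?V') (Z \<inter> ?V') Q"
    using transfer(3) feet_self_transition[OF old] by simp
  then have "foot E Z Q \<in> Z - X"
    using Z_Int_explode_delete[OF Z_subset X Y] unfolding feet_def by blast
  moreover have "set Q \<inter> Y = {}" using QV' unfolding explode_delete_def by blast
  moreover have "Q \<in> self_transitions_within V"
    using old foot_in_Z[OF old] Z_subset self_transition_path(3)[OF old]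
    unfolding self_transitions_within_def foot_cycle_def by auto
  ultimately show False using hit by blast
qed

lemma self_transitions_small_hitting_set:
  obtains X Y where "X \<subseteq> Z" "card X < s" and "Y \<subseteq> V - Z" "card Y < 2 * s"
    and "\<forall>Q\<in>self_transitions_within V. set Q \<inter> Y \<noteq> {} \<or> foot E Z Q \<in> X"
proof -
  have empty: "anticomplete_packing [] V"
    unfolding anticomplete_packing_def pairwise_anticomplete_def by simp
  then have "s \<noteq> 0" using anticomplete_packing_length by fastforce
  then have "Suc (length [] + (s - 1)) = s" by simp
  then have "\<exists>X\<subseteq>Z. \<exists>Y\<subseteq>V - Z. card X \<le> s - 1 \<and> card Y \<le> 2 * (s - 1) \<and>
      (\<forall>Q\<in>self_transitions_within V. set Q \<inter> Y \<noteq> {} \<or> foot E Z Q \<in> X)"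
    using empty by (rule self_transitions_hitting_set)
  with \<open>s \<noteq> 0\<close> show thesis using that by fastforce
qed

end

theorem mainTheorem9:
  fixes s :: nat and V Z :: "'a set" and E :: "'a \<Rightarrow> 'a \<Rightarrow> bool"
  assumes "s \<ge> 1"
    and "plantation s V E Z"
    and "monic V E Z"
  shows "\<exists>X Y. X \<subseteq> Z \<and> Y \<subseteq> V - Z \<and> card X < s \<and> card Y < 2 * s * fact s
    \<and> (let V' = explode_delete V E Z X Y in
         plantation s V' (induced E V') (Z - X) \<and> selfless V' (induced E V') (Z - X))"
proof -
  interpret stable_plantation s V Z E
    using assms(2,3) unfolding monic_def by unfold_locales blast+
  obtain X Y where X: "X \<subseteq> Z" "card X < s" and Y: "Y \<subseteq> V - Z" "card Y < 2 * s"
    and hit: "\<forall>Q\<in>self_transitions_within V. set Q \<inter> Y \<noteq> {} \<or> foot E Z Q \<in> X"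
    by (rule self_transitions_small_hitting_set)
  define V' where "V' = explode_delete V E Z X Y"
  have "plantation s V' (induced E V') (Z - X)"
    using plantation_induced[OF assms(2) explode_delete_subset[of V E Z X Y]]
      Z_Int_explode_delete[OF Z_subset X(1) Y(1)]
    unfolding V'_def by simp
  moreover have "selfless V' (induced E V') (Z - X)"
    unfolding V'_def using selfless_explode_delete[OF X(1) Y(1) hit] .
  moreover have "card Y < 2 * s * fact s"
  proof -
    have "2 * s \<le> 2 * s * fact s" using fact_ge_1[of s] by simp
    with Y(2) show ?thesis by linarith
  qed
  ultimately show ?thesis using X Y unfolding V'_def Let_def by blast
qed

end
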